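(* Let $(M,g)$ be a Riemannian manifold of dimension $n\ge 3$ and let $(M,g,\xi,\gamma,\delta)$ be a $\xi^\flat$-Yamabe soliton, i.e. $\gamma,\delta$ are real constants with $\frac12\mathcal{L}_\xi g=\gamma g+\delta\,\xi^\flat\otimes\xi^\flat$, such that $\xi^\flat$ is a Schrödinger–Ricci harmonic form, i.e. $(\Delta+\mathrm{Ric}_\sharp)(\xi^\flat)=0$. Then either $\delta=0$ (the soliton is a generalized Yamabe soliton) or $\mathrm{div}\,\xi=0$.
   Context: $\xi^\flat=g(\xi,\cdot)$, $\mathrm{Ric}_\sharp(\theta)(X)=\mathrm{Ric}(\theta^\sharp,X)$. $\Delta$ is the operator on $1$-forms which the paper calls the Laplace–Hodge operator, with convention fixed by the identity $\mathrm{div}(\mathcal{L}_Xg)=(\Delta+\mathrm{Ric}_\sharp)(X^\flat)+d(\mathrm{div}X)$ for every vector field $X$ (with $(\mathrm{div}T)(X)=\sum_i(\nabla_{E_i}T)(E_i,X)$ for a symmetric $(0,2)$-tensor $T$). *)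

theory Defs
  imports "HOL-Analysis.Analysis"
begin

text \<open>Local-coordinate Riemannian geometry on an open set U of R^n
  (index type 'n, n = CARD('n)). Fields are functions of the point x.\<close>

type_synonym 'n pt = "real ^ 'n"

definition pd :: "'n::finite \<Rightarrow> ('n pt \<Rightarrow> real) \<Rightarrow> 'n pt \<Rightarrow> real" where
  "pd i f x = deriv (\<lambda>t. f (x + t *\<^sub>R axis i 1)) 0"

fun Ck_on :: "nat \<Rightarrow> 'n::finite pt set \<Rightarrow> ('n pt \<Rightarrow> real) \<Rightarrow> bool" where
  "Ck_on 0 U f = continuous_on U f"
| "Ck_on (Suc k) U f = (f differentiable_on U \<and> (\<forall>i. Ck_on k U (pd i f)))"

definition smooth_on :: "'n::finite pt set \<Rightarrow> ('n pt \<Rightarrow> real) \<Rightarrow> bool" where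
  "smooth_on U f = (\<forall>k. Ck_on k U f)"

definition riemannian_metric_on :: "'n::finite pt set \<Rightarrow> ('n pt \<Rightarrow> real^'n^'n) \<Rightarrow> bool" where
  "riemannian_metric_on U g =
    ((\<forall>i j. smooth_on U (\<lambda>x. g x $ i $ j)) \<and>
     (\<forall>x\<in>U. \<forall>i j. g x $ i $ j = g x $ j $ i) \<and>
     (\<forall>x\<in>U. \<forall>v. v \<noteq> 0 \<longrightarrow> v \<bullet> (g x *v v) > 0))"

definition smooth_vf_on :: "'n::finite pt set \<Rightarrow> ('n pt \<Rightarrow> real^'n) \<Rightarrow> bool" where
  "smooth_vf_on U X = (\<forall>k. smooth_on U (\<lambda>x. X x $ k))"

definition ginv :: "('n::finite pt \<Rightarrow> real^'n^'n) \<Rightarrow> 'n pt \<Rightarrow> 'n \<Rightarrow> 'n \<Rightarrow> real" where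
  "ginv g x i j = matrix_inv (g x) $ i $ j"

definition christoffel :: "('n::finite pt \<Rightarrow> real^'n^'n) \<Rightarrow> 'n \<Rightarrow> 'n \<Rightarrow> 'n \<Rightarrow> 'n pt \<Rightarrow> real" where
  "christoffel g k i j x = (1/2) * (\<Sum>l\<in>UNIV. ginv g x k l *
      (pd i (\<lambda>y. g y $ j $ l) x + pd j (\<lambda>y. g y $ i $ l) x - pd l (\<lambda>y. g y $ i $ j) x))"

definition ricci :: "('n::finite pt \<Rightarrow> real^'n^'n) \<Rightarrow> 'n pt \<Rightarrow> 'n \<Rightarrow> 'n \<Rightarrow> real" where
  "ricci g x i j = (\<Sum>k\<in>UNIV. pd k (christoffel g k i j) x - pd j (christoffel g k i k) x
      + (\<Sum>p\<in>UNIV. christoffel g k k p x * christoffel g p i j x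
                  - christoffel g k j p x * christoffel g p i k x))"

text \<open>Musical isomorphisms; 1-forms are represented by their component fields.\<close>
definition flat :: "('n::finite pt \<Rightarrow> real^'n^'n) \<Rightarrow> ('n pt \<Rightarrow> real^'n) \<Rightarrow> 'n pt \<Rightarrow> real^'n" where
  "flat g X x = (\<chi> i. \<Sum>j\<in>UNIV. g x $ i $ j * X x $ j)"

definition sharp :: "('n::finite pt \<Rightarrow> real^'n^'n) \<Rightarrow> ('n pt \<Rightarrow> real^'n) \<Rightarrow> 'n pt \<Rightarrow> real^'n" where
  "sharp g \<theta> x = (\<chi> i. \<Sum>j\<in>UNIV. ginv g x i j * \<theta> x $ j)"

definition lie_g :: "('n::finite pt \<Rightarrow> real^'n^'n) \<Rightarrow> ('n pt \<Rightarrow> real^'n) \<Rightarrow> 'n pt \<Rightarrow> real^'n^'n" where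
  "lie_g g X x = (\<chi> i j. \<Sum>k\<in>UNIV. X x $ k * pd k (\<lambda>y. g y $ i $ j) x
       + g x $ k $ j * pd i (\<lambda>y. X y $ k) x + g x $ i $ k * pd j (\<lambda>y. X y $ k) x)"

definition div_vf :: "('n::finite pt \<Rightarrow> real^'n^'n) \<Rightarrow> ('n pt \<Rightarrow> real^'n) \<Rightarrow> 'n pt \<Rightarrow> real" where
  "div_vf g X x = (\<Sum>i\<in>UNIV. pd i (\<lambda>y. X y $ i) x
       + (\<Sum>k\<in>UNIV. christoffel g i i k x * X x $ k))"

definition cov_T :: "('n::finite pt \<Rightarrow> real^'n^'n) \<Rightarrow> ('n pt \<Rightarrow> real^'n^'n) \<Rightarrow> 'n \<Rightarrow> 'n \<Rightarrow> 'n \<Rightarrow> 'n pt \<Rightarrow> real" where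
  "cov_T g T i k j x = pd i (\<lambda>y. T y $ k $ j) x
       - (\<Sum>p\<in>UNIV. christoffel g p i k x * T x $ p $ j + christoffel g p i j x * T x $ k $ p)"

text \<open>(div T)(X) = sum over an orthonormal frame of (nabla_{E_i} T)(E_i, X),
  i.e. (div T)_j = g^ik (nabla_i T)_kj.\<close>
definition div_T :: "('n::finite pt \<Rightarrow> real^'n^'n) \<Rightarrow> ('n pt \<Rightarrow> real^'n^'n) \<Rightarrow> 'n pt \<Rightarrow> real^'n" where
  "div_T g T x = (\<chi> j. \<Sum>i\<in>UNIV. \<Sum>k\<in>UNIV. ginv g x i k * cov_T g T i k j x)"

definition ric_sharp :: "('n::finite pt \<Rightarrow> real^'n^'n) \<Rightarrow> ('n pt \<Rightarrow> real^'n) \<Rightarrow> 'n pt \<Rightarrow> real^'n" where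
  "ric_sharp g \<theta> x = (\<chi> j. \<Sum>i\<in>UNIV. sharp g \<theta> x $ i * ricci g x i j)"

definition dfun :: "('n::finite pt \<Rightarrow> real) \<Rightarrow> 'n pt \<Rightarrow> real^'n" where
  "dfun f x = (\<chi> j. pd j f x)"

text \<open>The Laplace-Hodge operator on 1-forms with the paper's convention, which is fixed by
  div(L_X g) = (Delta + Ric_sharp)(X^flat) + d(div X) for every X; since every 1-form is
  X^flat for X = theta^sharp, this determines Delta:\<close>
definition laplace_hodge :: "('n::finite pt \<Rightarrow> real^'n^'n) \<Rightarrow> ('n pt \<Rightarrow> real^'n) \<Rightarrow> 'n pt \<Rightarrow> real^'n" where
  "laplace_hodge g \<theta> x = div_T g (lie_g g (sharp g \<theta>)) x - ric_sharp g \<theta> x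
       - dfun (div_vf g (sharp g \<theta>)) x"

definition xi_flat_yamabe_soliton :: "'n::finite pt set \<Rightarrow> ('n pt \<Rightarrow> real^'n^'n) \<Rightarrow> ('n pt \<Rightarrow> real^'n) \<Rightarrow> real \<Rightarrow> real \<Rightarrow> bool" where
  "xi_flat_yamabe_soliton U g \<xi> \<gamma> \<delta> =
    (\<forall>x\<in>U. \<forall>i j. (1/2) * lie_g g \<xi> x $ i $ j
        = \<gamma> * g x $ i $ j + \<delta> * flat g \<xi> x $ i * flat g \<xi> x $ j)"

definition schroedinger_ricci_harmonic :: "'n::finite pt set \<Rightarrow> ('n pt \<Rightarrow> real^'n^'n) \<Rightarrow> ('n pt \<Rightarrow> real^'n) \<Rightarrow> bool" where
  "schroedinger_ricci_harmonic U g \<theta> = (\<forall>x\<in>U. laplace_hodge g \<theta> x + ric_sharp g \<theta> x = 0)"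

end

theory Submission
  imports Defs
begin

(* Tracing the soliton equation gives div \<xi> = n \<gamma> + \<delta> |\<xi>|^2. As g is parallel,
   div (L_\<xi> g) = 2 \<delta> div (\<xi>^flat \<otimes> \<xi>^flat) = 2 \<delta> ((div \<xi>) \<xi>^flat + \<nabla>_\<xi> \<xi>^flat),
   while d (div \<xi>) = \<delta> d |\<xi>|^2. For harmonic \<xi>^flat the identity defining the Laplace-Hodge
   operator reduces to div (L_\<xi> g) = d (div \<xi>); evaluating it on \<xi> and using
   \<xi> (|\<xi>|^2) = 2 g (\<nabla>_\<xi> \<xi>, \<xi>) leaves \<delta> (div \<xi>) |\<xi>|^2 = 0. So for \<delta> \<noteq> 0 the divergence
   vanishes wherever \<xi> does not. At a zero of \<xi> it equals n \<gamma>; if \<gamma> \<noteq> 0, then |\<xi>|^2 takes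
   only the values 0 and -n \<gamma>/\<delta>, so by continuity \<xi> vanishes near that zero, and there the
   soliton equation reads \<gamma> g = 0, which is absurd. *)

lemma has_real_derivative_pd:
  fixes f :: "'n::finite pt \<Rightarrow> real"
  assumes "f differentiable (at x)"
  shows "((\<lambda>t. f (x + t *\<^sub>R axis i 1)) has_real_derivative pd i f x) (at 0)"
proof -
  have "(\<lambda>t. f (x + t *\<^sub>R axis i 1)) differentiable (at 0)"
    using differentiable_chain_at[of "\<lambda>t::real. x + t *\<^sub>R axis i 1" 0 f] assms
    by (simp add: o_def)
  then show ?thesis
    unfolding pd_def using DERIV_deriv_iff_real_differentiable by blast
qed

lemma pd_eqI:
  "((\<lambda>t. f (x + t *\<^sub>R axis i 1)) has_real_derivative D) (at 0) \<Longrightarrow> pd i f x = D"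
  unfolding pd_def by (rule DERIV_imp_deriv)

lemma pd_const [simp]: "pd i (\<lambda>y. c) x = 0"
  by (rule pd_eqI) simp

lemma pd_add:
  assumes "f differentiable (at x)" "h differentiable (at x)"
  shows "pd i (\<lambda>y. f y + h y) x = pd i f x + pd i h x"
  by (rule pd_eqI) (intro DERIV_add has_real_derivative_pd assms)

lemma pd_mult:
  assumes "f differentiable (at x)" "h differentiable (at x)"
  shows "pd i (\<lambda>y. f y * h y) x = pd i f x * h x + f x * pd i h x"
proof (rule pd_eqI)
  show "((\<lambda>t. f (x + t *\<^sub>R axis i 1) * h (x + t *\<^sub>R axis i 1))
          has_real_derivative pd i f x * h x + f x * pd i h x) (at 0)"
    using DERIV_mult[OF has_real_derivative_pd[OF assms(1)] has_real_derivative_pd[OF assms(2)]]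
    by (simp add: mult.commute)
qed

lemma pd_sum:
  assumes "\<And>l. l \<in> A \<Longrightarrow> F l differentiable (at x)"
  shows "pd i (\<lambda>y. \<Sum>l\<in>A. F l y) x = (\<Sum>l\<in>A. pd i (F l) x)"
  by (rule pd_eqI) (intro DERIV_sum has_real_derivative_pd assms)

lemma pd_cong_open:
  assumes "open U" "x \<in> U" "\<And>y. y \<in> U \<Longrightarrow> f y = h y"
  shows "pd i f x = pd i h x"
proof -
  have "continuous (at 0) (\<lambda>t::real. x + t *\<^sub>R axis i 1)"
    by (intro continuous_intros)
  then have "eventually (\<lambda>t. x + t *\<^sub>R axis i 1 \<in> U) (nhds 0)"
    using assms(1,2) unfolding continuous_at eventually_nhds_conv_at
    by (simp add: tendsto_def)
  then have "eventually (\<lambda>t. f (x + t *\<^sub>R axis i 1) = h (x + t *\<^sub>R axis i 1)) (nhds 0)"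
    by (rule eventually_mono) (simp add: assms(3))
  then show ?thesis unfolding pd_def by (rule deriv_cong_ev) simp
qed

lemma smooth_on_differentiable_at:
  assumes "smooth_on U f" "open U" "x \<in> U"
  shows "f differentiable (at x)"
proof -
  have "Ck_on 1 U f" using assms(1) unfolding smooth_on_def by blast
  then show ?thesis using assms(2,3) differentiable_on_eq_differentiable_at by auto
qed

(* The data of a metric and a vector field at one point: G, H and dG i j k are g_ij, g^ij and
   \<partial>_i g_jk, X and dX i k are \<xi>^k and \<partial>_i \<xi>^k. In this notation Gamma1 i k l = g(\<nabla>_i \<partial>_k, \<partial>_l),
   \<theta> = \<xi>^flat, nabla\<theta> i k = (\<nabla>_i \<theta>)_k, and nabla2 and div2 compute the covariant derivative and the
   divergence of a (0,2)-tensor from its value T and its partials dT i k j = \<partial>_i T_kj. *)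
locale metric_jet =
  fixes G H :: "'n::finite \<Rightarrow> 'n \<Rightarrow> real"
    and dG :: "'n \<Rightarrow> 'n \<Rightarrow> 'n \<Rightarrow> real"
    and X :: "'n \<Rightarrow> real"
    and dX :: "'n \<Rightarrow> 'n \<Rightarrow> real"
  assumes G_sym: "G i j = G j i"
    and H_sym: "H i j = H j i"
    and H_inverse: "(\<Sum>k\<in>UNIV. H i k * G k j) = (if i = j then 1 else 0)"
    and dG_sym: "dG i j k = dG i k j"
begin

definition g_trace :: "('n \<Rightarrow> 'n \<Rightarrow> real) \<Rightarrow> real" where
  "g_trace T = (\<Sum>i\<in>UNIV. \<Sum>k\<in>UNIV. H i k * T i k)"

definition Gamma1 :: "'n \<Rightarrow> 'n \<Rightarrow> 'n \<Rightarrow> real" where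
  "Gamma1 i k l = 1/2 * (dG i k l + dG k i l - dG l i k)"

definition Gamma2 :: "'n \<Rightarrow> 'n \<Rightarrow> 'n \<Rightarrow> real" where
  "Gamma2 p i k = 1/2 * (\<Sum>l\<in>UNIV. H p l * (dG i k l + dG k i l - dG l i k))"

definition \<theta> :: "'n \<Rightarrow> real" where
  "\<theta> k = (\<Sum>l\<in>UNIV. G k l * X l)"

definition d\<theta> :: "'n \<Rightarrow> 'n \<Rightarrow> real" where
  "d\<theta> i k = (\<Sum>l\<in>UNIV. dG i k l * X l + G k l * dX i l)"

definition nabla\<theta> :: "'n \<Rightarrow> 'n \<Rightarrow> real" where
  "nabla\<theta> i k = d\<theta> i k - (\<Sum>m\<in>UNIV. X m * Gamma1 i k m)"

definition lie :: "'n \<Rightarrow> 'n \<Rightarrow> real" where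
  "lie k j = (\<Sum>m\<in>UNIV. X m * dG m k j + G m j * dX k m + G k m * dX j m)"

definition divergence :: real where
  "divergence = (\<Sum>i\<in>UNIV. dX i i + (\<Sum>k\<in>UNIV. Gamma2 i i k * X k))"

definition sq_norm :: real where
  "sq_norm = (\<Sum>a\<in>UNIV. \<Sum>b\<in>UNIV. G a b * X a * X b)"

definition d_sq_norm :: "'n \<Rightarrow> real" where
  "d_sq_norm j = (\<Sum>a\<in>UNIV. \<Sum>b\<in>UNIV. dG j a b * X a * X b + G a b * (dX j a * X b + X a * dX j b))"

definition nabla2 :: "('n \<Rightarrow> 'n \<Rightarrow> 'n \<Rightarrow> real) \<Rightarrow> ('n \<Rightarrow> 'n \<Rightarrow> real) \<Rightarrow> 'n \<Rightarrow> 'n \<Rightarrow> 'n \<Rightarrow> real" where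
  "nabla2 dT T i k j = dT i k j - (\<Sum>p\<in>UNIV. Gamma2 p i k * T p j + Gamma2 p i j * T k p)"

definition div2 :: "('n \<Rightarrow> 'n \<Rightarrow> 'n \<Rightarrow> real) \<Rightarrow> ('n \<Rightarrow> 'n \<Rightarrow> real) \<Rightarrow> 'n \<Rightarrow> real" where
  "div2 dT T j = (\<Sum>i\<in>UNIV. \<Sum>k\<in>UNIV. H i k * nabla2 dT T i k j)"

lemma H_G_contract: "(\<Sum>p\<in>UNIV. (\<Sum>l\<in>UNIV. H p l * A l) * G p j) = A j"
proof -
  have "(\<Sum>p\<in>UNIV. (\<Sum>l\<in>UNIV. H p l * A l) * G p j) = (\<Sum>p\<in>UNIV. \<Sum>l\<in>UNIV. H p l * A l * G p j)"
    by (simp add: sum_distrib_right)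
  also have "\<dots> = (\<Sum>l\<in>UNIV. \<Sum>p\<in>UNIV. H p l * A l * G p j)" by (rule sum.swap)
  also have "\<dots> = (\<Sum>l\<in>UNIV. A l * (\<Sum>p\<in>UNIV. H l p * G p j))"
    by (simp add: sum_distrib_left H_sym algebra_simps)
  finally show ?thesis by (simp add: H_inverse mult_delta_right)
qed

lemma H_contract_lower: "(\<Sum>k\<in>UNIV. H i k * (\<Sum>l\<in>UNIV. G k l * Y l)) = Y i"
proof -
  have "(\<Sum>k\<in>UNIV. H i k * (\<Sum>l\<in>UNIV. G k l * Y l)) = (\<Sum>k\<in>UNIV. \<Sum>l\<in>UNIV. H i k * G k l * Y l)"
    by (simp add: sum_distrib_left algebra_simps)
  also have "\<dots> = (\<Sum>l\<in>UNIV. \<Sum>k\<in>UNIV. H i k * G k l * Y l)" by (rule sum.swap)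
  also have "\<dots> = (\<Sum>l\<in>UNIV. (\<Sum>k\<in>UNIV. H i k * G k l) * Y l)"
    by (simp add: sum_distrib_right)
  finally show ?thesis by (simp add: H_inverse mult_delta_left)
qed

lemma H_\<theta>: "(\<Sum>k\<in>UNIV. H i k * \<theta> k) = X i"
  unfolding \<theta>_def by (rule H_contract_lower)

lemma g_trace_G: "g_trace G = real CARD('n)"
proof -
  have "(\<Sum>k\<in>UNIV. H i k * G i k) = 1" for i
    using H_inverse[of i i] by (simp add: G_sym[of i])
  then show ?thesis unfolding g_trace_def by simp
qed

lemma Gamma2_eq: "Gamma2 p i k = (\<Sum>l\<in>UNIV. H p l * Gamma1 i k l)"
  unfolding Gamma2_def Gamma1_def by (simp add: sum_distrib_left algebra_simps)

lemma Gamma2_lower: "(\<Sum>p\<in>UNIV. Gamma2 p i k * G p j) = Gamma1 i k j"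
  unfolding Gamma2_eq by (rule H_G_contract)

lemma Gamma2_\<theta>: "(\<Sum>p\<in>UNIV. Gamma2 p i k * \<theta> p) = (\<Sum>m\<in>UNIV. X m * Gamma1 i k m)"
proof -
  have "(\<Sum>p\<in>UNIV. Gamma2 p i k * \<theta> p) = (\<Sum>p\<in>UNIV. \<Sum>m\<in>UNIV. Gamma2 p i k * G p m * X m)"
    unfolding \<theta>_def by (simp add: sum_distrib_left algebra_simps)
  also have "\<dots> = (\<Sum>m\<in>UNIV. \<Sum>p\<in>UNIV. Gamma2 p i k * G p m * X m)" by (rule sum.swap)
  also have "\<dots> = (\<Sum>m\<in>UNIV. (\<Sum>p\<in>UNIV. Gamma2 p i k * G p m) * X m)"
    by (simp add: sum_distrib_right)
  also have "\<dots> = (\<Sum>m\<in>UNIV. X m * Gamma1 i k m)"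
    by (rule sum.cong) (simp_all add: Gamma2_lower)
  finally show ?thesis .
qed

lemma sq_norm_eq: "sq_norm = (\<Sum>j\<in>UNIV. X j * \<theta> j)"
  unfolding sq_norm_def \<theta>_def by (simp add: sum_distrib_left algebra_simps)

lemma dG_eq_Gamma1: "dG i k j = Gamma1 i k j + Gamma1 i j k"
  unfolding Gamma1_def using dG_sym[of i j k] by (simp add: algebra_simps)

lemma lie_eq_sym_nabla\<theta>: "lie i k = nabla\<theta> i k + nabla\<theta> k i"
proof -
  have "nabla\<theta> i k + nabla\<theta> k i = (\<Sum>l\<in>UNIV. dG i k l * X l + G k l * dX i l
          + (dG k i l * X l + G i l * dX k l) - X l * (Gamma1 i k l + Gamma1 k i l))"
    unfolding nabla\<theta>_def d\<theta>_def by (simp add: sum.distrib sum_subtractf algebra_simps)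
  also have "\<dots> = lie i k"
    unfolding lie_def Gamma1_def using dG_sym G_sym by (intro sum.cong) (simp_all add: algebra_simps)
  finally show ?thesis by simp
qed

lemma g_trace_nabla\<theta>: "g_trace nabla\<theta> = g_trace lie / 2"
proof -
  have "(\<Sum>i\<in>UNIV. \<Sum>k\<in>UNIV. H i k * nabla\<theta> k i) = g_trace nabla\<theta>"
    unfolding g_trace_def by (subst sum.swap) (simp add: H_sym)
  then show ?thesis
    unfolding g_trace_def lie_eq_sym_nabla\<theta> by (simp add: distrib_left sum.distrib)
qed

lemma sum_Gamma2_trace: "(\<Sum>i\<in>UNIV. Gamma2 i i k) = g_trace (dG k) / 2"
proof -
  have swap: "(\<Sum>i\<in>UNIV. \<Sum>l\<in>UNIV. H i l * dG l i k) = (\<Sum>i\<in>UNIV. \<Sum>l\<in>UNIV. H i l * dG i k l)"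
  proof -
    have "(\<Sum>i\<in>UNIV. \<Sum>l\<in>UNIV. H i l * dG l i k) = (\<Sum>l\<in>UNIV. \<Sum>i\<in>UNIV. H i l * dG l i k)"
      by (rule sum.swap)
    also have "\<dots> = (\<Sum>i\<in>UNIV. \<Sum>l\<in>UNIV. H i l * dG i k l)"
      by (intro sum.cong refl) (simp only: H_sym dG_sym[of _ k])
    finally show ?thesis .
  qed
  have "(\<Sum>i\<in>UNIV. Gamma2 i i k) = 1/2 * ((\<Sum>i\<in>UNIV. \<Sum>l\<in>UNIV. H i l * dG i k l)
      + (\<Sum>i\<in>UNIV. \<Sum>l\<in>UNIV. H i l * dG k i l) - (\<Sum>i\<in>UNIV. \<Sum>l\<in>UNIV. H i l * dG l i k))"
    unfolding Gamma2_def by (simp add: sum_distrib_left sum.distrib sum_subtractf algebra_simps)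
  then show ?thesis unfolding swap g_trace_def by simp
qed

lemma g_trace_lie: "g_trace lie = (\<Sum>m\<in>UNIV. X m * g_trace (dG m)) + 2 * (\<Sum>i\<in>UNIV. dX i i)"
proof -
  have dG_part: "(\<Sum>i\<in>UNIV. \<Sum>k\<in>UNIV. H i k * (\<Sum>m\<in>UNIV. X m * dG m i k))
      = (\<Sum>m\<in>UNIV. X m * g_trace (dG m))"
  proof -
    have "(\<Sum>i\<in>UNIV. \<Sum>k\<in>UNIV. H i k * (\<Sum>m\<in>UNIV. X m * dG m i k))
        = (\<Sum>i\<in>UNIV. \<Sum>k\<in>UNIV. \<Sum>m\<in>UNIV. X m * (H i k * dG m i k))"
      by (simp add: sum_distrib_left algebra_simps)
    also have "\<dots> = (\<Sum>i\<in>UNIV. \<Sum>m\<in>UNIV. \<Sum>k\<in>UNIV. X m * (H i k * dG m i k))"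
      by (rule sum.cong[OF refl]) (rule sum.swap)
    also have "\<dots> = (\<Sum>m\<in>UNIV. \<Sum>i\<in>UNIV. \<Sum>k\<in>UNIV. X m * (H i k * dG m i k))"
      by (rule sum.swap)
    finally show ?thesis unfolding g_trace_def by (simp add: sum_distrib_left)
  qed
  have dX_part1: "(\<Sum>i\<in>UNIV. \<Sum>k\<in>UNIV. H i k * (\<Sum>m\<in>UNIV. G m k * dX i m)) = (\<Sum>i\<in>UNIV. dX i i)"
    using H_contract_lower G_sym by simp
  have dX_part2: "(\<Sum>i\<in>UNIV. \<Sum>k\<in>UNIV. H i k * (\<Sum>m\<in>UNIV. G i m * dX k m)) = (\<Sum>i\<in>UNIV. dX i i)"
  proof -
    have "(\<Sum>i\<in>UNIV. \<Sum>k\<in>UNIV. H i k * (\<Sum>m\<in>UNIV. G i m * dX k m))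
        = (\<Sum>k\<in>UNIV. \<Sum>i\<in>UNIV. H k i * (\<Sum>m\<in>UNIV. G i m * dX k m))"
      by (subst sum.swap) (simp add: H_sym)
    then show ?thesis using H_contract_lower by simp
  qed
  have "g_trace lie = (\<Sum>i\<in>UNIV. \<Sum>k\<in>UNIV. H i k * (\<Sum>m\<in>UNIV. X m * dG m i k))
      + (\<Sum>i\<in>UNIV. \<Sum>k\<in>UNIV. H i k * (\<Sum>m\<in>UNIV. G m k * dX i m))
      + (\<Sum>i\<in>UNIV. \<Sum>k\<in>UNIV. H i k * (\<Sum>m\<in>UNIV. G i m * dX k m))"
    unfolding g_trace_def lie_def by (simp add: sum.distrib distrib_left)
  then show ?thesis using dG_part dX_part1 dX_part2 by simp
qed

lemma divergence_eq_half_g_trace_lie: "divergence = g_trace lie / 2"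
proof -
  have "(\<Sum>i\<in>UNIV. \<Sum>k\<in>UNIV. Gamma2 i i k * X k) = (\<Sum>k\<in>UNIV. X k * (\<Sum>i\<in>UNIV. Gamma2 i i k))"
    by (subst sum.swap) (simp add: sum_distrib_left mult.commute)
  then show ?thesis
    unfolding divergence_def g_trace_lie sum_Gamma2_trace
    by (simp add: sum.distrib sum_divide_distrib[symmetric])
qed

lemma g_trace_nabla\<theta>_eq_divergence: "g_trace nabla\<theta> = divergence"
  by (simp add: g_trace_nabla\<theta> divergence_eq_half_g_trace_lie)

lemma d_sq_norm_along: "(\<Sum>j\<in>UNIV. X j * d_sq_norm j) = 2 * (\<Sum>j\<in>UNIV. X j * (\<Sum>i\<in>UNIV. X i * nabla\<theta> i j))"
proof -
  have swap23: "(\<Sum>i\<in>UNIV. \<Sum>j\<in>UNIV. \<Sum>l\<in>UNIV. F i j l) = (\<Sum>i\<in>UNIV. \<Sum>l\<in>UNIV. \<Sum>j\<in>UNIV. F i j l)"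
    for F :: "'n \<Rightarrow> 'n \<Rightarrow> 'n \<Rightarrow> real"
    by (rule sum.cong[OF refl]) (rule sum.swap)
  define S where "S = (\<Sum>i\<in>UNIV. \<Sum>j\<in>UNIV. \<Sum>l\<in>UNIV. X i * X j * X l * dG i j l)"
  define T where "T = (\<Sum>i\<in>UNIV. \<Sum>j\<in>UNIV. \<Sum>l\<in>UNIV. X i * X j * G j l * dX i l)"
  define V where "V = (\<Sum>i\<in>UNIV. \<Sum>j\<in>UNIV. \<Sum>l\<in>UNIV. X i * X j * X l * Gamma1 i j l)"
  have "(\<Sum>j\<in>UNIV. X j * (\<Sum>i\<in>UNIV. X i * nabla\<theta> i j)) = (\<Sum>i\<in>UNIV. \<Sum>j\<in>UNIV. X i * X j * nabla\<theta> i j)"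
    by (subst sum.swap) (simp add: sum_distrib_left algebra_simps)
  also have "\<dots> = S + T - V"
    unfolding S_def T_def V_def nabla\<theta>_def d\<theta>_def
    by (simp add: sum_distrib_left sum.distrib sum_subtractf algebra_simps)
  finally have lhs: "(\<Sum>j\<in>UNIV. X j * (\<Sum>i\<in>UNIV. X i * nabla\<theta> i j)) = S + T - V" .
  have S_swap12: "(\<Sum>i\<in>UNIV. \<Sum>j\<in>UNIV. \<Sum>l\<in>UNIV. X i * X j * X l * dG j i l) = S"
    unfolding S_def by (subst sum.swap) (simp add: algebra_simps)
  have S_rotate: "(\<Sum>i\<in>UNIV. \<Sum>j\<in>UNIV. \<Sum>l\<in>UNIV. X i * X j * X l * dG l i j) = S"
  proof -
    have "(\<Sum>i\<in>UNIV. \<Sum>j\<in>UNIV. \<Sum>l\<in>UNIV. X i * X j * X l * dG l i j)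
       = (\<Sum>l\<in>UNIV. \<Sum>i\<in>UNIV. \<Sum>j\<in>UNIV. X i * X j * X l * dG l i j)"
      by (subst swap23) (rule sum.swap)
    then show ?thesis unfolding S_def by (simp add: algebra_simps)
  qed
  have V: "2 * V = S"
  proof -
    have "2 * V = S + (\<Sum>i\<in>UNIV. \<Sum>j\<in>UNIV. \<Sum>l\<in>UNIV. X i * X j * X l * dG j i l)
         - (\<Sum>i\<in>UNIV. \<Sum>j\<in>UNIV. \<Sum>l\<in>UNIV. X i * X j * X l * dG l i j)"
      unfolding V_def S_def Gamma1_def
      by (simp add: sum_distrib_left sum.distrib sum_subtractf algebra_simps)
    then show ?thesis using S_swap12 S_rotate by simp
  qed
  have T1: "(\<Sum>j\<in>UNIV. \<Sum>a\<in>UNIV. \<Sum>b\<in>UNIV. X j * (G a b * (dX j a * X b))) = T"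
    unfolding T_def by (subst swap23) (intro sum.cong refl, simp add: G_sym[of _ "_::'n"] algebra_simps)
  have T2: "(\<Sum>j\<in>UNIV. \<Sum>a\<in>UNIV. \<Sum>b\<in>UNIV. X j * (G a b * (X a * dX j b))) = T"
    unfolding T_def by (intro sum.cong refl) (simp add: algebra_simps)
  have "(\<Sum>j\<in>UNIV. X j * d_sq_norm j)
     = S + (\<Sum>j\<in>UNIV. \<Sum>a\<in>UNIV. \<Sum>b\<in>UNIV. X j * (G a b * (dX j a * X b)))
         + (\<Sum>j\<in>UNIV. \<Sum>a\<in>UNIV. \<Sum>b\<in>UNIV. X j * (G a b * (X a * dX j b)))"
    unfolding S_def d_sq_norm_def by (simp add: sum_distrib_left sum.distrib algebra_simps)
  then show ?thesis using lhs V T1 T2 by simp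
qed

end

locale soliton_jet = metric_jet G H dG X dX
  for G H :: "'n::finite \<Rightarrow> 'n \<Rightarrow> real" and dG X dX +
  fixes \<gamma> \<delta> :: real
  assumes soliton: "1/2 * lie k j = \<gamma> * G k j + \<delta> * \<theta> k * \<theta> j"
begin

(* \<partial>_i of the right-hand side of the soliton equation, i.e. \<partial>_i (L_\<xi> g)_kj wherever the
   equation holds on an open set. *)
definition d_lie :: "'n \<Rightarrow> 'n \<Rightarrow> 'n \<Rightarrow> real" where
  "d_lie i k j = 2 * (\<gamma> * dG i k j + \<delta> * (d\<theta> i k * \<theta> j + \<theta> k * d\<theta> i j))"

lemma lie_soliton: "lie k j = 2 * (\<gamma> * G k j + \<delta> * \<theta> k * \<theta> j)"
  using soliton[of k j] by simp

lemma divergence_soliton: "divergence = real CARD('n) * \<gamma> + \<delta> * sq_norm"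
proof -
  have "g_trace lie = 2 * (\<gamma> * g_trace G + \<delta> * (\<Sum>i\<in>UNIV. \<theta> i * (\<Sum>k\<in>UNIV. H i k * \<theta> k)))"
    unfolding g_trace_def lie_soliton
    by (simp add: sum.distrib sum_distrib_left algebra_simps)
  then show ?thesis
    unfolding divergence_eq_half_g_trace_lie g_trace_G H_\<theta> sq_norm_eq
    by (simp add: mult.commute)
qed

lemma nabla2_lie: "nabla2 d_lie lie i k j = 2 * \<delta> * (nabla\<theta> i k * \<theta> j + \<theta> k * nabla\<theta> i j)"
proof -
  have Gamma2_lie1: "(\<Sum>p\<in>UNIV. Gamma2 p i k * lie p j)
      = 2 * (\<gamma> * Gamma1 i k j + \<delta> * (\<Sum>m\<in>UNIV. X m * Gamma1 i k m) * \<theta> j)"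
  proof -
    have "(\<Sum>p\<in>UNIV. Gamma2 p i k * lie p j)
        = 2 * (\<gamma> * (\<Sum>p\<in>UNIV. Gamma2 p i k * G p j) + \<delta> * (\<Sum>p\<in>UNIV. Gamma2 p i k * \<theta> p) * \<theta> j)"
      unfolding lie_soliton by (simp add: sum.distrib sum_distrib_left sum_distrib_right algebra_simps)
    then show ?thesis by (simp add: Gamma2_lower Gamma2_\<theta>)
  qed
  have Gamma2_lie2: "(\<Sum>p\<in>UNIV. Gamma2 p i j * lie k p)
      = 2 * (\<gamma> * Gamma1 i j k + \<delta> * \<theta> k * (\<Sum>m\<in>UNIV. X m * Gamma1 i j m))"
  proof -
    have "(\<Sum>p\<in>UNIV. Gamma2 p i j * lie k p)
        = 2 * (\<gamma> * (\<Sum>p\<in>UNIV. Gamma2 p i j * G p k) + \<delta> * \<theta> k * (\<Sum>p\<in>UNIV. Gamma2 p i j * \<theta> p))"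
      unfolding lie_soliton by (simp add: G_sym[of k] sum.distrib sum_distrib_left sum_distrib_right algebra_simps)
    then show ?thesis by (simp add: Gamma2_lower Gamma2_\<theta>)
  qed
  show ?thesis
    unfolding nabla2_def d_lie_def nabla\<theta>_def sum.distrib Gamma2_lie1 Gamma2_lie2 dG_eq_Gamma1[of i k j]
    by (simp add: algebra_simps)
qed

lemma div2_lie: "div2 d_lie lie j = 2 * \<delta> * (divergence * \<theta> j + (\<Sum>i\<in>UNIV. X i * nabla\<theta> i j))"
proof -
  have "div2 d_lie lie j = 2 * \<delta> * (g_trace nabla\<theta> * \<theta> j + (\<Sum>i\<in>UNIV. nabla\<theta> i j * (\<Sum>k\<in>UNIV. H i k * \<theta> k)))"
    unfolding div2_def nabla2_lie g_trace_def
    by (simp add: sum.distrib sum_distrib_left sum_distrib_right algebra_simps)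
  then show ?thesis
    unfolding g_trace_nabla\<theta>_eq_divergence H_\<theta> by (simp add: mult.commute)
qed

lemma soliton_harmonic:
  assumes harmonic: "\<And>j. div2 d_lie lie j = \<delta> * d_sq_norm j"
  shows "\<delta> * (divergence * sq_norm) = 0"
proof -
  define P where "P = (\<Sum>j\<in>UNIV. X j * (\<Sum>i\<in>UNIV. X i * nabla\<theta> i j))"
  have "(\<Sum>j\<in>UNIV. X j * div2 d_lie lie j) = 2 * \<delta> * (divergence * sq_norm + P)"
    unfolding div2_lie P_def sq_norm_eq by (simp add: sum.distrib sum_distrib_left algebra_simps)
  moreover have "(\<Sum>j\<in>UNIV. X j * div2 d_lie lie j) = 2 * \<delta> * P"
    unfolding harmonic P_def using d_sq_norm_along
    by (simp add: sum_distrib_left[symmetric] mult.left_commute[of _ \<delta>])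
  ultimately show ?thesis by (simp add: algebra_simps)
qed

end

lemma riemannian_metric_invertible:
  assumes "riemannian_metric_on U g" "y \<in> U"
  shows "g y ** matrix_inv (g y) = mat 1 \<and> matrix_inv (g y) ** g y = mat 1"
proof -
  have "v \<bullet> (g y *v v) > 0" if "v \<noteq> 0" for v
    using assms that unfolding riemannian_metric_on_def by blast
  then have "\<forall>v. g y *v v = 0 \<longrightarrow> v = 0"
    by (metis inner_zero_right less_irrefl)
  then have "invertible (g y)"
    using matrix_left_invertible_ker invertible_left_inverse by blast
  then show ?thesis
    unfolding invertible_def matrix_inv_def by (rule someI_ex)
qed

lemma ginv_left_inverse:
  assumes "riemannian_metric_on U g" "y \<in> U"
  shows "(\<Sum>k\<in>UNIV. ginv g y i k * g y $ k $ j) = (if i = j then 1 else 0)"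
proof -
  have "(matrix_inv (g y) ** g y) $ i $ j = mat 1 $ i $ j"
    using riemannian_metric_invertible[OF assms] by simp
  then show ?thesis unfolding ginv_def matrix_matrix_mult_def mat_def by simp
qed

lemma ginv_sym:
  assumes "riemannian_metric_on U g" "y \<in> U"
  shows "ginv g y i j = ginv g y j i"
proof -
  have "transpose (g y) = g y"
    using assms unfolding riemannian_metric_on_def transpose_def by (simp add: vec_eq_iff)
  then have "transpose (matrix_inv (g y)) ** g y = mat 1"
    using riemannian_metric_invertible[OF assms] by (metis matrix_transpose_mul transpose_mat)
  then have "transpose (matrix_inv (g y)) = matrix_inv (g y)"
    using riemannian_metric_invertible[OF assms] by (metis matrix_mul_assoc matrix_mul_lid matrix_mul_rid)
  then show ?thesis
    unfolding ginv_def transpose_def by (metis vec_lambda_beta)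
qed

lemma metric_jet_at:
  assumes "open U" "riemannian_metric_on U g" "y \<in> U"
  shows "metric_jet (\<lambda>i j. g y $ i $ j) (ginv g y) (\<lambda>i j k. pd i (\<lambda>z. g z $ j $ k) y)"
proof
  have sym: "g z $ i $ j = g z $ j $ i" if "z \<in> U" for z i j
    using assms(2) that unfolding riemannian_metric_on_def by blast
  show "g y $ i $ j = g y $ j $ i" for i j
    using sym assms(3) .
  show "ginv g y i j = ginv g y j i" for i j
    using ginv_sym[OF assms(2,3)] .
  show "(\<Sum>k\<in>UNIV. ginv g y i k * g y $ k $ j) = (if i = j then 1 else 0)" for i j
    using ginv_left_inverse[OF assms(2,3)] .
  show "pd i (\<lambda>z. g z $ j $ k) y = pd i (\<lambda>z. g z $ k $ j) y" for i j k
    by (rule pd_cong_open[OF assms(1,3)]) (rule sym)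
qed

lemma soliton_jet_at:
  assumes "open U" "riemannian_metric_on U g" "xi_flat_yamabe_soliton U g \<xi> \<gamma> \<delta>" "y \<in> U"
  shows "soliton_jet (\<lambda>i j. g y $ i $ j) (ginv g y) (\<lambda>i j k. pd i (\<lambda>z. g z $ j $ k) y)
    (\<lambda>k. \<xi> y $ k) (\<lambda>i k. pd i (\<lambda>z. \<xi> z $ k) y) \<gamma> \<delta>"
proof -
  interpret metric_jet "\<lambda>i j. g y $ i $ j" "ginv g y" "\<lambda>i j k. pd i (\<lambda>z. g z $ j $ k) y"
    "\<lambda>k. \<xi> y $ k" "\<lambda>i k. pd i (\<lambda>z. \<xi> z $ k) y"
    using metric_jet_at[OF assms(1,2,4)] .
  have "1/2 * lie k j = \<gamma> * g y $ k $ j + \<delta> * \<theta> k * \<theta> j" for k j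
    using assms(3,4) unfolding xi_flat_yamabe_soliton_def lie_def \<theta>_def lie_g_def flat_def by simp
  then show ?thesis by unfold_locales
qed

definition metric_sq_norm :: "('n::finite pt \<Rightarrow> real^'n^'n) \<Rightarrow> ('n pt \<Rightarrow> real^'n) \<Rightarrow> 'n pt \<Rightarrow> real" where
  "metric_sq_norm g \<xi> y = (\<Sum>a\<in>UNIV. \<Sum>b\<in>UNIV. g y $ a $ b * \<xi> y $ a * \<xi> y $ b)"

lemma div_vf_soliton:
  fixes g :: "'n::finite pt \<Rightarrow> real^'n^'n"
  assumes "open U" "riemannian_metric_on U g" "xi_flat_yamabe_soliton U g \<xi> \<gamma> \<delta>" "y \<in> U"
  shows "div_vf g \<xi> y = real CARD('n) * \<gamma> + \<delta> * metric_sq_norm g \<xi> y"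
proof -
  interpret soliton_jet "\<lambda>i j. g y $ i $ j" "ginv g y" "\<lambda>i j k. pd i (\<lambda>z. g z $ j $ k) y"
    "\<lambda>k. \<xi> y $ k" "\<lambda>i k. pd i (\<lambda>z. \<xi> z $ k) y" \<gamma> \<delta>
    using soliton_jet_at[OF assms] .
  have "div_vf g \<xi> y = divergence"
    unfolding div_vf_def divergence_def Gamma2_def christoffel_def by simp
  then show ?thesis
    unfolding divergence_soliton sq_norm_def metric_sq_norm_def .
qed

lemma riemannian_metric_differentiable:
  "open U \<Longrightarrow> riemannian_metric_on U g \<Longrightarrow> x \<in> U \<Longrightarrow> (\<lambda>y. g y $ i $ j) differentiable (at x)"
  unfolding riemannian_metric_on_def by (blast intro: smooth_on_differentiable_at)

lemma smooth_vf_differentiable: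
  "open U \<Longrightarrow> smooth_vf_on U \<xi> \<Longrightarrow> x \<in> U \<Longrightarrow> (\<lambda>y. \<xi> y $ k) differentiable (at x)"
  unfolding smooth_vf_on_def by (blast intro: smooth_on_differentiable_at)

lemma pd_flat:
  assumes "\<And>k l. (\<lambda>y. g y $ k $ l) differentiable (at x)" "\<And>l. (\<lambda>y. \<xi> y $ l) differentiable (at x)"
  shows "pd i (\<lambda>y. flat g \<xi> y $ k) x
    = (\<Sum>l\<in>UNIV. pd i (\<lambda>y. g y $ k $ l) x * \<xi> x $ l + g x $ k $ l * pd i (\<lambda>y. \<xi> y $ l) x)"
  unfolding flat_def by (simp add: pd_sum pd_mult assms)

lemma pd_metric_sq_norm:
  assumes "\<And>k l. (\<lambda>y. g y $ k $ l) differentiable (at x)" "\<And>l. (\<lambda>y. \<xi> y $ l) differentiable (at x)"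
  shows "pd j (metric_sq_norm g \<xi>) x = (\<Sum>a\<in>UNIV. \<Sum>b\<in>UNIV. pd j (\<lambda>y. g y $ a $ b) x * \<xi> x $ a * \<xi> x $ b
    + g x $ a $ b * (pd j (\<lambda>y. \<xi> y $ a) x * \<xi> x $ b + \<xi> x $ a * pd j (\<lambda>y. \<xi> y $ b) x))"
  unfolding metric_sq_norm_def[abs_def] by (simp add: pd_sum pd_mult assms algebra_simps)

lemma pd_lie_g_soliton:
  assumes "open U" "riemannian_metric_on U g" "smooth_vf_on U \<xi>"
    "xi_flat_yamabe_soliton U g \<xi> \<gamma> \<delta>" "x \<in> U"
  shows "pd i (\<lambda>y. lie_g g \<xi> y $ k $ j) x = 2 * (\<gamma> * pd i (\<lambda>y. g y $ k $ j) x
    + \<delta> * (pd i (\<lambda>y. flat g \<xi> y $ k) x * flat g \<xi> x $ j + flat g \<xi> x $ k * pd i (\<lambda>y. flat g \<xi> y $ j) x))"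
proof -
  have g_diff: "(\<lambda>y. g y $ k $ l) differentiable (at x)" for k l
    using riemannian_metric_differentiable[OF assms(1,2,5)] .
  have flat_diff: "(\<lambda>y. flat g \<xi> y $ k) differentiable (at x)" for k
    unfolding flat_def using g_diff smooth_vf_differentiable[OF assms(1,3,5)] by simp
  have "pd i (\<lambda>y. lie_g g \<xi> y $ k $ j) x
      = pd i (\<lambda>y. 2 * (\<gamma> * g y $ k $ j + \<delta> * (flat g \<xi> y $ k * flat g \<xi> y $ j))) x"
    using assms(4) unfolding xi_flat_yamabe_soliton_def
    by (intro pd_cong_open[OF assms(1,5)]) (simp add: field_simps)
  then show ?thesis by (simp add: pd_add pd_mult g_diff flat_diff)
qed

lemma pd_div_vf_soliton:
  fixes g :: "'n::finite pt \<Rightarrow> real^'n^'n"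
  assumes "open U" "riemannian_metric_on U g" "smooth_vf_on U \<xi>"
    "xi_flat_yamabe_soliton U g \<xi> \<gamma> \<delta>" "x \<in> U"
  shows "pd j (div_vf g \<xi>) x = \<delta> * pd j (metric_sq_norm g \<xi>) x"
proof -
  have "metric_sq_norm g \<xi> differentiable (at x)"
    unfolding metric_sq_norm_def[abs_def]
    using riemannian_metric_differentiable[OF assms(1,2,5)] smooth_vf_differentiable[OF assms(1,3,5)]
    by simp
  moreover have "pd j (div_vf g \<xi>) x = pd j (\<lambda>y. real CARD('n) * \<gamma> + \<delta> * metric_sq_norm g \<xi> y) x"
    by (intro pd_cong_open[OF assms(1,5)] div_vf_soliton[OF assms(1,2,4)])
  ultimately show ?thesis by (simp add: pd_add pd_mult)
qed

lemma sharp_flat: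
  assumes "open U" "riemannian_metric_on U g" "y \<in> U"
  shows "sharp g (flat g \<xi>) y = \<xi> y"
proof -
  interpret metric_jet "\<lambda>i j. g y $ i $ j" "ginv g y" "\<lambda>i j k. pd i (\<lambda>z. g z $ j $ k) y"
    using metric_jet_at[OF assms] .
  show ?thesis
    unfolding sharp_def flat_def by (simp add: vec_eq_iff H_contract_lower)
qed

lemma schroedinger_ricci_harmonic_flat:
  assumes "open U" "riemannian_metric_on U g" "schroedinger_ricci_harmonic U g (flat g \<xi>)" "x \<in> U"
  shows "div_T g (lie_g g \<xi>) x = dfun (div_vf g \<xi>) x"
proof -
  define \<xi>' where "\<xi>' = sharp g (flat g \<xi>)"
  have \<xi>'_eq: "\<xi>' y = \<xi> y" if "y \<in> U" for y
    unfolding \<xi>'_def using sharp_flat[OF assms(1,2) that] .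
  have pd_\<xi>': "pd i (\<lambda>z. \<xi>' z $ k) y = pd i (\<lambda>z. \<xi> z $ k) y" if "y \<in> U" for i k y
    by (rule pd_cong_open[OF assms(1) that]) (simp add: \<xi>'_eq)
  have lie_g_\<xi>': "lie_g g \<xi>' y = lie_g g \<xi> y" and div_vf_\<xi>': "div_vf g \<xi>' y = div_vf g \<xi> y"
    if "y \<in> U" for y
    using that unfolding lie_g_def div_vf_def
    by (simp_all add: pd_\<xi>' \<xi>'_eq)
  have "pd i (\<lambda>y. lie_g g \<xi>' y $ k $ j) x = pd i (\<lambda>y. lie_g g \<xi> y $ k $ j) x" for i k j
    by (rule pd_cong_open[OF assms(1,4)]) (simp add: lie_g_\<xi>')
  then have "div_T g (lie_g g \<xi>') x = div_T g (lie_g g \<xi>) x"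
    unfolding div_T_def cov_T_def by (simp add: lie_g_\<xi>' assms(4))
  moreover have "pd j (div_vf g \<xi>') x = pd j (div_vf g \<xi>) x" for j
    by (rule pd_cong_open[OF assms(1,4)]) (rule div_vf_\<xi>')
  then have "dfun (div_vf g \<xi>') x = dfun (div_vf g \<xi>) x"
    unfolding dfun_def by simp
  moreover have "div_T g (lie_g g \<xi>') x - dfun (div_vf g \<xi>') x = 0"
    using assms(3,4) unfolding schroedinger_ricci_harmonic_def laplace_hodge_def \<xi>'_def by simp
  ultimately show ?thesis by simp
qed

lemma soliton_harmonic_at:
  fixes g :: "'n::finite pt \<Rightarrow> real^'n^'n"
  assumes "open U" "riemannian_metric_on U g" "smooth_vf_on U \<xi>"
    "xi_flat_yamabe_soliton U g \<xi> \<gamma> \<delta>" "schroedinger_ricci_harmonic U g (flat g \<xi>)" "x \<in> U"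
  shows "\<delta> * (div_vf g \<xi> x * metric_sq_norm g \<xi> x) = 0"
proof -
  interpret soliton_jet "\<lambda>i j. g x $ i $ j" "ginv g x" "\<lambda>i j k. pd i (\<lambda>z. g z $ j $ k) x"
    "\<lambda>k. \<xi> x $ k" "\<lambda>i k. pd i (\<lambda>z. \<xi> z $ k) x" \<gamma> \<delta>
    using soliton_jet_at[OF assms(1,2,4,6)] .
  have g_diff: "(\<lambda>y. g y $ k $ l) differentiable (at x)" for k l
    using riemannian_metric_differentiable[OF assms(1,2,6)] .
  have \<xi>_diff: "(\<lambda>y. \<xi> y $ l) differentiable (at x)" for l
    using smooth_vf_differentiable[OF assms(1,3,6)] .
  have "div2 d_lie lie j = \<delta> * d_sq_norm j" for j
  proof -
    have "lie_g g \<xi> x $ k $ l = lie k l" for k l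
      unfolding lie_g_def lie_def by simp
    moreover have "pd i (\<lambda>y. lie_g g \<xi> y $ k $ l) x = d_lie i k l" for i k l
      unfolding pd_lie_g_soliton[OF assms(1-4,6)] pd_flat[OF g_diff \<xi>_diff] d_lie_def d\<theta>_def \<theta>_def
      by (simp add: flat_def)
    ultimately have "div2 d_lie lie j = div_T g (lie_g g \<xi>) x $ j"
      unfolding div2_def nabla2_def div_T_def cov_T_def Gamma2_def christoffel_def by simp
    also have "\<dots> = pd j (div_vf g \<xi>) x"
      using schroedinger_ricci_harmonic_flat[OF assms(1,2,5,6)] by (simp add: dfun_def)
    also have "\<dots> = \<delta> * d_sq_norm j"
      unfolding pd_div_vf_soliton[OF assms(1-4,6)] pd_metric_sq_norm[OF g_diff \<xi>_diff] d_sq_norm_def ..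
    finally show ?thesis .
  qed
  then have "\<delta> * (divergence * sq_norm) = 0"
    by (rule soliton_harmonic)
  moreover have "div_vf g \<xi> x = divergence"
    unfolding div_vf_def divergence_def Gamma2_def christoffel_def by simp
  ultimately show ?thesis
    unfolding metric_sq_norm_def sq_norm_def by simp
qed

lemma metric_sq_norm_eq_0_iff:
  assumes "riemannian_metric_on U g" "y \<in> U"
  shows "metric_sq_norm g \<xi> y = 0 \<longleftrightarrow> \<xi> y = 0"
proof -
  have "metric_sq_norm g \<xi> y = \<xi> y \<bullet> (g y *v \<xi> y)"
    unfolding metric_sq_norm_def inner_vec_def matrix_vector_mult_def
    by (simp add: sum_distrib_left algebra_simps)
  then show ?thesis
    using assms unfolding riemannian_metric_on_def by force
qed

lemma riemannian_metric_diag_pos: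
  assumes "riemannian_metric_on U g" "x \<in> U"
  shows "0 < g x $ i $ i"
proof -
  have "0 < axis i 1 \<bullet> (g x *v axis i 1)"
    using assms unfolding riemannian_metric_on_def by (simp add: axis_eq_0_iff)
  also have "axis i 1 \<bullet> (g x *v axis i 1) = g x $ i $ i"
    by (simp add: inner_vec_def matrix_vector_mult_def axis_def mult_delta_left mult_delta_right)
  finally show ?thesis .
qed

lemma soliton_gamma_eq_0_if_vanishing_near:
  assumes "riemannian_metric_on U g" "xi_flat_yamabe_soliton U g \<xi> \<gamma> \<delta>"
    "0 < r" "ball x r \<subseteq> U" "\<And>y. y \<in> ball x r \<Longrightarrow> \<xi> y = 0"
  shows "\<gamma> = 0"
proof -
  have x: "x \<in> U" "\<xi> x = 0"
    using assms(3-5) by auto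
  have "pd i (\<lambda>y. \<xi> y $ k) x = pd i (\<lambda>y. 0) x" for i k
    by (rule pd_cong_open[of "ball x r"]) (use assms(3,5) in auto)
  then have "lie_g g \<xi> x = 0" and "flat g \<xi> x = 0"
    unfolding lie_g_def flat_def by (simp_all add: x vec_eq_iff)
  then have "\<gamma> * g x $ i $ i = 0" for i
    using assms(2) x unfolding xi_flat_yamabe_soliton_def by force
  then show ?thesis
    using riemannian_metric_diag_pos[OF assms(1) x(1)] by (metis less_irrefl mult_eq_0_iff)
qed

lemma soliton_gamma_eq_0_at_zero:
  fixes g :: "'n::finite pt \<Rightarrow> real^'n^'n"
  assumes "open U" "riemannian_metric_on U g" "smooth_vf_on U \<xi>"
    "xi_flat_yamabe_soliton U g \<xi> \<gamma> \<delta>" "\<delta> \<noteq> 0"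
    "\<And>y. y \<in> U \<Longrightarrow> div_vf g \<xi> y * metric_sq_norm g \<xi> y = 0" "x \<in> U" "\<xi> x = 0"
  shows "\<gamma> = 0"
proof (rule ccontr)
  assume "\<gamma> \<noteq> 0"
  define c where "c = - real CARD('n) * \<gamma> / \<delta>"
  have "c \<noteq> 0"
    using \<open>\<gamma> \<noteq> 0\<close> assms(5) unfolding c_def by simp
  have two_values: "metric_sq_norm g \<xi> y = 0 \<or> metric_sq_norm g \<xi> y = c" if "y \<in> U" for y
  proof -
    have "(real CARD('n) * \<gamma> + \<delta> * metric_sq_norm g \<xi> y) * metric_sq_norm g \<xi> y = 0"
      using assms(6)[OF that] div_vf_soliton[OF assms(1,2,4) that] by simp
    then have "metric_sq_norm g \<xi> y = 0 \<or> \<delta> * metric_sq_norm g \<xi> y = - real CARD('n) * \<gamma>"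
      by auto
    then show ?thesis
      using assms(5) unfolding c_def by (auto simp: field_simps)
  qed
  have "isCont (metric_sq_norm g \<xi>) x"
    unfolding metric_sq_norm_def[abs_def]
    using riemannian_metric_differentiable[OF assms(1,2,7)] smooth_vf_differentiable[OF assms(1,3,7)]
    by (intro continuous_intros differentiable_imp_continuous_within)
  moreover have "metric_sq_norm g \<xi> x = 0"
    using metric_sq_norm_eq_0_iff[OF assms(2,7)] assms(8) by simp
  ultimately obtain e where "e > 0" and e: "\<And>y. dist y x < e \<Longrightarrow> \<bar>metric_sq_norm g \<xi> y\<bar> < \<bar>c\<bar>"
    using \<open>c \<noteq> 0\<close> unfolding continuous_at_eps_delta dist_real_def
    by (metis diff_zero zero_less_abs_iff)
  obtain r where "r > 0" "ball x r \<subseteq> U"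
    using assms(1,7) open_contains_ball by blast
  then have "ball x (min e r) \<subseteq> U" by auto
  moreover have "\<xi> y = 0" if "y \<in> ball x (min e r)" for y
  proof -
    have "y \<in> U" "\<bar>metric_sq_norm g \<xi> y\<bar> < \<bar>c\<bar>"
      using that \<open>ball x r \<subseteq> U\<close> e by (auto simp: dist_commute)
    then show ?thesis
      using two_values metric_sq_norm_eq_0_iff[OF assms(2)] by force
  qed
  ultimately have "\<gamma> = 0"
    using \<open>e > 0\<close> \<open>r > 0\<close> by (intro soliton_gamma_eq_0_if_vanishing_near[OF assms(2,4)]) auto
  with \<open>\<gamma> \<noteq> 0\<close> show False ..
qed

theorem theorem3p14:
  fixes U :: "(real ^ 'n::finite) set"
    and g :: "real ^ 'n \<Rightarrow> real ^ 'n ^ 'n"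
    and \<xi> :: "real ^ 'n \<Rightarrow> real ^ 'n"
    and \<gamma> \<delta> :: real
  assumes "CARD('n) \<ge> 3"
    and "open U"
    and "riemannian_metric_on U g"
    and "smooth_vf_on U \<xi>"
    and "xi_flat_yamabe_soliton U g \<xi> \<gamma> \<delta>"
    and "schroedinger_ricci_harmonic U g (flat g \<xi>)"
  shows "\<delta> = 0 \<or> (\<forall>x\<in>U. div_vf g \<xi> x = 0)"
proof (cases "\<delta> = 0")
  case False
  have vanish: "div_vf g \<xi> y * metric_sq_norm g \<xi> y = 0" if "y \<in> U" for y
    using soliton_harmonic_at[OF assms(2-6) that] False by simp
  have "div_vf g \<xi> x = 0" if x: "x \<in> U" for x
  proof (cases "\<xi> x = 0")
    case True
    then have "\<gamma> = 0"
      using soliton_gamma_eq_0_at_zero[OF assms(2-5) False vanish x] by simp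
    then show ?thesis
      using div_vf_soliton[OF assms(2,3,5) x] metric_sq_norm_eq_0_iff[OF assms(3) x] True by simp
  next
    case False
    then show ?thesis
      using vanish[OF x] metric_sq_norm_eq_0_iff[OF assms(3) x] by simp
  qed
  then show ?thesis by blast
qed simp

end
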